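(* Let $t$ be a positive integer and let $M$ be a matroid with the $(t,2t)$-property. If $M$ has a $t$-echidna $(S_1,\ldots, S_n)$ with $n\geq3t-1$, then $(S_1,\ldots, S_n)$ is also a $t$-coechidna of $M$.
   Context: A matroid $M$ has the $(t,2t)$-property if every $t$-element subset of $E(M)$ is contained in both a $2t$-element circuit and a $2t$-element cocircuit of $M$. A $t$-echidna of order $n$ of $M$ is a partition $(S_1,\ldots,S_n)$ of a subset of $E(M)$ such that $|S_i|=2$ for all $i\in\{1,\dots,n\}$, and $\bigcup_{i\in I}S_i$ is a circuit of $M$ for every $I\subseteq\{1,\dots,n\}$ with $|I|=t$. A $t$-coechidna of $M$ is a $t$-echidna of the dual matroid $M^*$ (i.e. the unions of any $t$ of the $S_i$ are cocircuits of $M$). *)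

theory Defs
  imports Main
begin

definition matroid :: "'a set \<Rightarrow> ('a set \<Rightarrow> bool) \<Rightarrow> bool" where
  "matroid E indep \<longleftrightarrow>
     finite E \<and> indep {} \<and>
     (\<forall>X. indep X \<longrightarrow> X \<subseteq> E) \<and>
     (\<forall>X Y. indep Y \<and> X \<subseteq> Y \<longrightarrow> indep X) \<and>
     (\<forall>X Y. indep X \<and> indep Y \<and> card X < card Y \<longrightarrow> (\<exists>y\<in>Y - X. indep (insert y X)))"

definition basis :: "'a set \<Rightarrow> ('a set \<Rightarrow> bool) \<Rightarrow> 'a set \<Rightarrow> bool" where
  "basis E indep B \<longleftrightarrow> B \<subseteq> E \<and> indep B \<and> (\<forall>X. X \<subseteq> E \<and> indep X \<and> B \<subseteq> X \<longrightarrow> X = B)"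

definition circuit :: "'a set \<Rightarrow> ('a set \<Rightarrow> bool) \<Rightarrow> 'a set \<Rightarrow> bool" where
  "circuit E indep C \<longleftrightarrow> C \<subseteq> E \<and> \<not> indep C \<and> (\<forall>X. X \<subset> C \<longrightarrow> indep X)"

definition dual_indep :: "'a set \<Rightarrow> ('a set \<Rightarrow> bool) \<Rightarrow> 'a set \<Rightarrow> bool" where
  "dual_indep E indep X \<longleftrightarrow> X \<subseteq> E \<and> (\<exists>B. basis E indep B \<and> X \<inter> B = {})"

definition cocircuit :: "'a set \<Rightarrow> ('a set \<Rightarrow> bool) \<Rightarrow> 'a set \<Rightarrow> bool" where
  "cocircuit E indep D \<longleftrightarrow> circuit E (dual_indep E indep) D"

definition t_2t_property :: "'a set \<Rightarrow> ('a set \<Rightarrow> bool) \<Rightarrow> nat \<Rightarrow> bool" where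
  "t_2t_property E indep t \<longleftrightarrow>
     (\<forall>X. X \<subseteq> E \<and> card X = t \<longrightarrow>
        (\<exists>C. circuit E indep C \<and> X \<subseteq> C \<and> card C = 2 * t) \<and>
        (\<exists>D. cocircuit E indep D \<and> X \<subseteq> D \<and> card D = 2 * t))"

definition echidna :: "'a set \<Rightarrow> ('a set \<Rightarrow> bool) \<Rightarrow> nat \<Rightarrow> (nat \<Rightarrow> 'a set) \<Rightarrow> nat \<Rightarrow> bool" where
  "echidna E indep t S n \<longleftrightarrow>
     (\<forall>i<n. S i \<subseteq> E \<and> card (S i) = 2) \<and>
     (\<forall>i<n. \<forall>j<n. i \<noteq> j \<longrightarrow> S i \<inter> S j = {}) \<and>
     (\<forall>I. I \<subseteq> {..<n} \<and> card I = t \<longrightarrow> circuit E indep (\<Union>i\<in>I. S i))"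

definition coechidna :: "'a set \<Rightarrow> ('a set \<Rightarrow> bool) \<Rightarrow> nat \<Rightarrow> (nat \<Rightarrow> 'a set) \<Rightarrow> nat \<Rightarrow> bool" where
  "coechidna E indep t S n \<longleftrightarrow> echidna E (dual_indep E indep) t S n"

end

theory Submission
  imports Defs "HOL-Library.Disjoint_Sets"
begin

(* Fix a t-set I of pairs and a transversal X of them. The (t,2t)-property gives a cocircuit
   D of size 2t containing X. If some pair S_i, i in I, met D in a single element, then at most
   2t - 1 further pairs meet D, so n >= 3t - 1 leaves t - 1 pairs disjoint from D; together with
   S_i they form a circuit meeting D in exactly one element, contradicting orthogonality of
   circuits and cocircuits. Hence the union of the pairs in I lies in D, and comparing
   cardinalities it equals D. *)

lemma disjoint_family_on_ex_inj_choice: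
  assumes "disjoint_family_on S J" and "\<forall>j\<in>J. S j \<inter> A \<noteq> {}"
  shows "\<exists>f. inj_on f J \<and> (\<forall>j\<in>J. f j \<in> S j \<inter> A)"
proof -
  from assms(2) have "\<forall>j\<in>J. \<exists>x. x \<in> S j \<inter> A" by blast
  then obtain f where f: "\<forall>j\<in>J. f j \<in> S j \<inter> A" by metis
  with assms(1) have "inj_on f J"
    by (fastforce simp: inj_on_def disjoint_family_on_def)
  with f show ?thesis by blast
qed

lemma card_disjoint_family_meeting_le:
  assumes "finite A" and "disjoint_family_on S J" and "\<forall>j\<in>J. S j \<inter> A \<noteq> {}"
  shows "card J \<le> card A"
proof -
  obtain f where "inj_on f J" "\<forall>j\<in>J. f j \<in> S j \<inter> A"
    using disjoint_family_on_ex_inj_choice[OF assms(2,3)] by blast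
  then show ?thesis
    using card_inj_on_le[of f J A] assms(1) by blast
qed

context
  fixes E :: "'a set" and indep :: "'a set \<Rightarrow> bool"
  assumes M: "matroid E indep"
begin

lemma matroid_finite: "finite E"
  using M by (simp add: matroid_def)

lemma matroid_indep_subset_ground: "indep X \<Longrightarrow> X \<subseteq> E"
  using M by (simp add: matroid_def)

lemma matroid_indep_subset: "indep Y \<Longrightarrow> X \<subseteq> Y \<Longrightarrow> indep X"
  using M unfolding matroid_def by blast

lemma matroid_augment:
  "indep X \<Longrightarrow> indep Y \<Longrightarrow> card X < card Y \<Longrightarrow> \<exists>y\<in>Y - X. indep (insert y X)"
  using M unfolding matroid_def by blast

lemma cocircuit_finite: "cocircuit E indep D \<Longrightarrow> finite D"
  using matroid_finite finite_subset by (auto simp: cocircuit_def circuit_def)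

lemma indep_card_le_basis:
  assumes B: "basis E indep B" and Y: "indep Y"
  shows "card Y \<le> card B"
proof (rule ccontr)
  assume "\<not> card Y \<le> card B"
  moreover have "indep B" using B by (simp add: basis_def)
  ultimately obtain y where y: "y \<in> Y - B" "indep (insert y B)"
    using matroid_augment Y not_le by blast
  moreover have "insert y B \<subseteq> E" using y(2) by (rule matroid_indep_subset_ground)
  ultimately have "insert y B = B" using B unfolding basis_def by blast
  with y show False by blast
qed

lemma basis_if_indep_card_ge:
  assumes B: "basis E indep B" and J: "indep J" and card_J: "card B \<le> card J"
  shows "basis E indep J"
  unfolding basis_def
proof (intro conjI allI impI)
  show "J \<subseteq> E" using J by (rule matroid_indep_subset_ground)
  show "indep J" by (fact J)
  fix X assume X: "X \<subseteq> E \<and> indep X \<and> J \<subseteq> X"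
  then have "finite X" using matroid_finite finite_subset by blast
  moreover have "card X \<le> card J"
    using indep_card_le_basis[OF B] X card_J le_trans by blast
  ultimately show "X = J" using X card_seteq by metis
qed

lemma ex_maximal_indep_between:
  assumes I: "indep I" and "I \<subseteq> A"
  obtains J where "indep J" "I \<subseteq> J" "J \<subseteq> A" "\<And>y. y \<in> A - J \<Longrightarrow> \<not> indep (insert y J)"
proof -
  let ?P = "{J. indep J \<and> I \<subseteq> J \<and> J \<subseteq> A}"
  have "?P \<subseteq> Pow E" by (auto dest: matroid_indep_subset_ground)
  then have fin: "finite ?P" by (rule finite_subset) (simp add: matroid_finite)
  have "I \<in> ?P" using I \<open>I \<subseteq> A\<close> by blast
  then have "\<exists>J\<in>?P. I \<subseteq> J \<and> (\<forall>J'\<in>?P. J \<subseteq> J' \<longrightarrow> J = J')"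
    by (rule finite_has_maximal2[OF fin])
  then obtain J where J: "J \<in> ?P" and max: "\<forall>J'\<in>?P. J \<subseteq> J' \<longrightarrow> J = J'"
    by (metis (no_types, lifting))
  have "\<not> indep (insert y J)" if "y \<in> A - J" for y
  proof
    assume "indep (insert y J)"
    with J that have "insert y J \<in> ?P" by blast
    with max have "J = insert y J" by blast
    with that show False by blast
  qed
  then show ?thesis using J by (intro that) auto
qed

lemma circuit_Int_cocircuit_neq_singleton:
  assumes C: "circuit E indep C" and D: "cocircuit E indep D"
  shows "C \<inter> D \<noteq> {e}"
proof
  assume e: "C \<inter> D = {e}"
  have D': "D \<subseteq> E" "\<not> dual_indep E indep D" "\<And>X. X \<subset> D \<Longrightarrow> dual_indep E indep X"
    using D by (auto simp: cocircuit_def circuit_def)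
  have C': "C \<subseteq> E" "\<not> indep C" "\<And>X. X \<subset> C \<Longrightarrow> indep X"
    using C by (auto simp: circuit_def)
  have "dual_indep E indep (D - {e})" using D'(3) e by blast
  then obtain B where B: "basis E indep B" "(D - {e}) \<inter> B = {}"
    by (auto simp: dual_indep_def)
  have "indep (C - {e})" using C'(3) e by blast
  moreover have "C - {e} \<subseteq> E - D" using C'(1) e by blast
  ultimately obtain J where J: "indep J" "C - {e} \<subseteq> J" "J \<subseteq> E - D"
    and J_max: "\<And>y. y \<in> (E - D) - J \<Longrightarrow> \<not> indep (insert y J)"
    using ex_maximal_indep_between by metis
  \<comment> \<open>B avoids D - {e}, so augmenting J from B can only add e, which would close the circuit C\<close>
  have "card B \<le> card J"
  proof (rule ccontr)
    assume "\<not> card B \<le> card J"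
    moreover have "indep B" using B by (simp add: basis_def)
    ultimately obtain y where y: "y \<in> B - J" "indep (insert y J)"
      using matroid_augment J(1) by (meson not_le)
    show False
    proof (cases "y = e")
      case True
      then have "C \<subseteq> insert y J" using J(2) by blast
      then show False using matroid_indep_subset y(2) C'(2) by blast
    next
      case False
      then have "y \<in> (E - D) - J" using y(1) B unfolding basis_def by blast
      then show False using J_max y(2) by blast
    qed
  qed
  then have "basis E indep J" using basis_if_indep_card_ge[OF B(1) J(1)] by blast
  then have "dual_indep E indep D" using J(3) D'(1) unfolding dual_indep_def by blast
  with D'(2) show False ..
qed

end

lemma echidna_pairD: "echidna E indep t S n \<Longrightarrow> i < n \<Longrightarrow> S i \<subseteq> E \<and> card (S i) = 2"
  by (simp add: echidna_def)

lemma echidna_disjoint_family: "echidna E indep t S n \<Longrightarrow> disjoint_family_on S {..<n}"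
  by (auto simp: echidna_def disjoint_family_on_def)

lemma echidna_circuitD:
  "echidna E indep t S n \<Longrightarrow> I \<subseteq> {..<n} \<Longrightarrow> card I = t \<Longrightarrow> circuit E indep (\<Union>i\<in>I. S i)"
  unfolding echidna_def by blast

lemma echidna_ex_circuit_Int_eq:
  assumes S: "echidna E indep t S n" and i: "i < n" and "t > 0"
    and "finite D" and room: "card (D - S i) + t \<le> n"
  shows "\<exists>C. circuit E indep C \<and> C \<inter> D = S i \<inter> D"
proof -
  have disj: "disjoint_family_on S {..<n}" using echidna_disjoint_family[OF S] .
  define L where "L = {j \<in> {..<n} - {i}. S j \<inter> D \<noteq> {}}"
  define K where "K = {..<n} - {i} - L"
  have "S j \<inter> D = S j \<inter> (D - S i)" if "j \<in> L" for j
    using disjoint_family_onD[OF disj, of j i] that i by (auto simp: L_def)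
  then have "card L \<le> card (D - S i)"
    using card_disjoint_family_meeting_le[of "D - S i" S L] \<open>finite D\<close>
      disjoint_family_on_mono[OF _ disj, of L] by (auto simp: L_def)
  moreover have "card K = (n - 1) - card L"
    unfolding K_def using i by (subst card_Diff_subset) (auto simp: L_def)
  ultimately have "t - 1 \<le> card K" using room by linarith
  then obtain K' where K': "K' \<subseteq> K" "card K' = t - 1"
    using obtain_subset_with_card_n by blast
  have "i \<notin> K'" "finite K'" using K' by (auto simp: K_def intro: finite_subset)
  then have "card (insert i K') = t" using K'(2) \<open>t > 0\<close> by simp
  moreover have "insert i K' \<subseteq> {..<n}" using i K'(1) by (auto simp: K_def)
  ultimately have "circuit E indep (\<Union>j\<in>insert i K'. S j)"
    using echidna_circuitD[OF S] by blast
  moreover have "(\<Union>j\<in>insert i K'. S j) \<inter> D = S i \<inter> D"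
    using K'(1) by (auto simp: K_def L_def)
  ultimately show ?thesis by blast
qed

lemma echidna_pair_subset_cocircuit:
  assumes M: "matroid E indep" and S: "echidna E indep t S n"
    and "t > 0" and n: "3 * t - 1 \<le> n"
    and D: "cocircuit E indep D" "card D = 2 * t"
    and i: "i < n" and meets: "S i \<inter> D \<noteq> {}"
  shows "S i \<subseteq> D"
proof (rule ccontr)
  assume not_sub: "\<not> S i \<subseteq> D"
  have "finite D" using cocircuit_finite[OF M D(1)] .
  have card_Si: "card (S i) = 2" using echidna_pairD[OF S i] ..
  then have "finite (S i)" by (simp add: card_ge_0_finite)
  then have "card (S i \<inter> D) < 2"
    using not_sub card_Si by (metis Int_lower1 card_seteq inf.absorb_iff1 linorder_not_less)
  moreover have "card (S i \<inter> D) \<noteq> 0" using meets \<open>finite D\<close> by simp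
  ultimately obtain x where x: "S i \<inter> D = {x}"
    by (metis One_nat_def card_1_singletonE less_2_cases)
  have "card (D - S i) = 2 * t - 1"
    using card_Diff_subset_Int[of D "S i"] \<open>finite D\<close> x D(2) by (simp add: Int_commute)
  then have "card (D - S i) + t \<le> n" using n by linarith
  then obtain C where "circuit E indep C" "C \<inter> D = {x}"
    using echidna_ex_circuit_Int_eq[OF S i \<open>t > 0\<close> \<open>finite D\<close>] x by auto
  then show False using circuit_Int_cocircuit_neq_singleton[OF M _ D(1)] by blast
qed

lemma echidna_union_cocircuit:
  assumes M: "matroid E indep" and "t > 0" and P: "t_2t_property E indep t"
    and S: "echidna E indep t S n" and n: "3 * t - 1 \<le> n"
    and I: "I \<subseteq> {..<n}" "card I = t"
  shows "cocircuit E indep (\<Union>i\<in>I. S i)"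
proof -
  have pairs: "\<And>i. i \<in> I \<Longrightarrow> S i \<subseteq> E \<and> card (S i) = 2"
    using echidna_pairD[OF S] I(1) by blast
  have disj: "disjoint_family_on S I"
    using disjoint_family_on_mono[OF I(1) echidna_disjoint_family[OF S]] .
  have "\<forall>i\<in>I. S i \<inter> UNIV \<noteq> {}" using pairs by fastforce
  then obtain f where f: "inj_on f I" "\<forall>i\<in>I. f i \<in> S i"
    using disjoint_family_on_ex_inj_choice[OF disj] by blast
  have "f ` I \<subseteq> E" "card (f ` I) = t" using f pairs I(2) by (auto simp: card_image)
  then obtain D where D: "cocircuit E indep D" "f ` I \<subseteq> D" "card D = 2 * t"
    using P by (auto simp: t_2t_property_def)
  have "S i \<subseteq> D" if "i \<in> I" for i
    using echidna_pair_subset_cocircuit[OF M S \<open>t > 0\<close> n D(1,3)] I(1) f D(2) that by blast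
  then have sub: "(\<Union>i\<in>I. S i) \<subseteq> D" by blast
  have "card (\<Union>i\<in>I. S i) = (\<Sum>i\<in>I. card (S i))"
    using disj pairs I by (intro card_UN_disjoint') (auto simp: card_ge_0_finite intro: finite_subset)
  also have "\<dots> = card D" using pairs I(2) D(3) by simp
  finally have "(\<Union>i\<in>I. S i) = D"
    using card_seteq[OF cocircuit_finite[OF M D(1)] sub] by simp
  with D(1) show ?thesis by simp
qed

theorem lemma4p3:
  fixes E :: "'a set" and indep :: "'a set \<Rightarrow> bool" and t n :: nat and S :: "nat \<Rightarrow> 'a set"
  assumes "matroid E indep"
    and "t > 0"
    and "t_2t_property E indep t"
    and "echidna E indep t S n"
    and "n \<ge> 3 * t - 1"
  shows "coechidna E indep t S n"
  using echidna_union_cocircuit[OF assms] assms(4)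
  by (auto simp: coechidna_def echidna_def cocircuit_def)

end
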